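(* Let $I=[0,1]$ and $I'=[0',1']$ be two copies of the unit interval, and let $f\colon I\sqcup I'\to I$ be any continuous map with $f(0)=f(0')=0$ and $f(1)=f(1')=1$. Then $(0,0')$ and $(1,1')$ belong to the same connected component of $\Sigma_f$.
   Context: $\Sigma_f=\{(x,y)\in (I\sqcup I')^2: x\ne y,\ f(x)=f(y)\}$. *)

theory Defs
  imports "HOL-Analysis.Analysis"
begin

text \<open>The disjoint union I \<squnion> I' of two copies of [0,1]: the point (False, t) is t \<in> I,
  the point (True, t) is t' \<in> I'.\<close>
definition II :: "(bool \<times> real) topology" where
  "II = sum_topology (\<lambda>_. top_of_set {0..1}) UNIV"

definition Sigma_f :: "(bool \<times> real \<Rightarrow> real) \<Rightarrow> ((bool \<times> real) \<times> (bool \<times> real)) set" where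
  "Sigma_f f = {(x, y). x \<in> topspace II \<and> y \<in> topspace II \<and> x \<noteq> y \<and> f x = f y}"

end

theory Submission
  imports Defs
begin

text \<open>
  Restricted to the two copies of the interval, f gives maps g, h of [0,1] fixing 0 and 1, and
  (s, t) \<mapsto> (s, t') embeds the coincidence set K = {(s, t). g s = h t} into Sigma_f, so it
  suffices that (0,0) and (1,1) lie in one component of the compact set K. Otherwise K splits
  into disjoint closed sets U \<ni> (0,0) and V \<ni> (1,1). Extend g and h by the identity to
  [-1,2]; then the zero set of p(s,t) = g s - h t in the square [-1,2] x [-1,2] is K together with
  two diagonal segments, one attached to U and one to V. Enlarging U by its segment and the bottom
  edge, V by its segment and the top edge, a Urysohn function \<chi> for the enlarged sets and p
  satisfy the sign conditions of the two-dimensional Poincare-Miranda theorem, so they have a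
  common zero; but every zero of p lies in one of the enlarged sets, where \<chi> = \<plusminus>1.
\<close>

lemma clamp_fixpoint_eq_0:
  fixes a b x y :: real
  assumes "x \<in> {a..b}" and "x = max a (min b (x - y))"
    and "x = a \<Longrightarrow> y \<le> 0" and "x = b \<Longrightarrow> 0 \<le> y"
  shows "y = 0"
  using assms by (auto simp: max_def min_def split: if_splits)

lemma poincare_miranda_2d:
  fixes p q :: "real \<times> real \<Rightarrow> real"
  assumes "a \<le> b" and "c \<le> d"
    and "continuous_on ({a..b} \<times> {c..d}) p" and "continuous_on ({a..b} \<times> {c..d}) q"
    and "\<And>t. t \<in> {c..d} \<Longrightarrow> p (a, t) \<le> 0" and "\<And>t. t \<in> {c..d} \<Longrightarrow> 0 \<le> p (b, t)"
    and "\<And>s. s \<in> {a..b} \<Longrightarrow> q (s, c) \<le> 0" and "\<And>s. s \<in> {a..b} \<Longrightarrow> 0 \<le> q (s, d)"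
  obtains s t where "s \<in> {a..b}" "t \<in> {c..d}" "p (s, t) = 0" "q (s, t) = 0"
proof -
  define G where "G x = (max a (min b (fst x - p x)), max c (min d (snd x - q x)))"
    for x :: "real \<times> real"
  have "continuous_on ({a..b} \<times> {c..d}) G"
    unfolding G_def using assms(3,4) by (intro continuous_intros) auto
  moreover have "G \<in> {a..b} \<times> {c..d} \<rightarrow> {a..b} \<times> {c..d}"
    using assms(1,2) by (auto simp: G_def)
  ultimately obtain x where x: "x \<in> {a..b} \<times> {c..d}" and "G x = x"
    using brouwer[of "{a..b} \<times> {c..d}" G] assms(1,2) by (auto simp: compact_Times convex_Times)
  moreover obtain s t where "x = (s, t)" by fastforce
  ultimately have st: "(s, t) \<in> {a..b} \<times> {c..d}" and "G (s, t) = (s, t)" by auto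
  then have fix_s: "s = max a (min b (s - p (s, t)))" and fix_t: "t = max c (min d (t - q (s, t)))"
    by (auto simp: G_def)
  have "p (s, t) = 0"
    by (rule clamp_fixpoint_eq_0[OF _ fix_s]) (use st assms(5,6) in auto)
  moreover have "q (s, t) = 0"
    by (rule clamp_fixpoint_eq_0[OF _ fix_t]) (use st assms(7,8) in auto)
  ultimately show ?thesis using st that by blast
qed

lemma compact_not_connected_component_separated:
  fixes K :: "'a::metric_space set"
  assumes "compact K" and "a \<in> K" and "b \<in> K"
    and "\<not> connected_component_of (top_of_set K) a b"
  obtains U V where "closed U" "closed V" "U \<union> V = K" "U \<inter> V = {}" "a \<in> U" "b \<in> V"
proof -
  have "quasi_component_of (top_of_set K) a = connected_component_of (top_of_set K) a"
    using assms(1)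
    by (intro quasi_eq_connected_component_of) (simp add: compact_space_subtopology Hausdorff_space_subtopology)
  with assms(4) have "\<not> quasi_component_of (top_of_set K) a b"
    by simp
  with assms(2,3) have "separated_between (top_of_set K) {a} {b}"
    by (simp add: quasi_component_nonseparated)
  then obtain U V where "closedin (top_of_set K) U" "closedin (top_of_set K) V"
    and UV: "U \<union> V = K" "disjnt U V" "a \<in> U" "b \<in> V"
    unfolding separated_between_alt by auto
  then have "closed U" and "closed V"
    using assms(1) closedin_compact compact_imp_closed by blast+
  with UV that show ?thesis by (simp add: disjnt_def)
qed

definition extend_id :: "(real \<Rightarrow> real) \<Rightarrow> real \<Rightarrow> real" where
  "extend_id g s = g (max 0 (min 1 s)) + (s - max 0 (min 1 s))"

lemma continuous_on_extend_id:
  assumes "continuous_on {0..1} g"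
  shows "continuous_on UNIV (extend_id g)"
proof -
  have "continuous_on UNIV (\<lambda>s. g (max 0 (min 1 s)))"
    by (rule continuous_on_compose2[OF assms]) (auto intro!: continuous_intros)
  then show ?thesis
    unfolding extend_id_def by (intro continuous_intros)
qed

lemma continuous_on_extend_id_diff:
  assumes "continuous_on {0..1} g" and "continuous_on {0..1} h"
  shows "continuous_on S (\<lambda>x. extend_id g (fst x) - extend_id h (snd x))"
proof -
  have "continuous_on UNIV (\<lambda>x::real \<times> real. extend_id g (fst x))"
    by (rule continuous_on_compose2[OF continuous_on_extend_id[OF assms(1)] continuous_on_fst[OF continuous_on_id]]) simp
  moreover have "continuous_on UNIV (\<lambda>x::real \<times> real. extend_id h (snd x))"
    by (rule continuous_on_compose2[OF continuous_on_extend_id[OF assms(2)] continuous_on_snd[OF continuous_on_id]]) simp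
  ultimately have "continuous_on UNIV (\<lambda>x. extend_id g (fst x) - extend_id h (snd x))"
    by (rule continuous_on_diff)
  then show ?thesis
    by (rule continuous_on_subset) simp
qed

lemma extend_id_inside: "s \<in> {0..1} \<Longrightarrow> extend_id g s = g s"
  by (simp add: extend_id_def)

lemma extend_id_outside: "g 0 = 0 \<Longrightarrow> g 1 = 1 \<Longrightarrow> s \<notin> {0..1} \<Longrightarrow> extend_id g s = s"
  by (auto simp: extend_id_def)

lemma extend_id_mem_iff:
  assumes "g ` {0..1} \<subseteq> {0..1}" and "g 0 = 0" and "g 1 = 1"
  shows "extend_id g s \<in> {0..1} \<longleftrightarrow> s \<in> {0..1}"
proof (cases "s \<in> {0..1}")
  case True
  with assms(1) show ?thesis
    by (auto simp: extend_id_inside image_subset_iff)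
next
  case False
  with assms(2,3) show ?thesis
    by (simp add: extend_id_outside)
qed

lemma extend_id_eq_iff:
  assumes g: "g ` {0..1} \<subseteq> {0..1}" "g 0 = 0" "g 1 = 1"
    and h: "h ` {0..1} \<subseteq> {0..1}" "h 0 = 0" "h 1 = 1"
  shows "extend_id g s = extend_id h t \<longleftrightarrow>
           s \<in> {0..1} \<and> t \<in> {0..1} \<and> g s = h t \<or> s \<notin> {0..1} \<and> t = s"
proof (cases "s \<in> {0..1}")
  case True
  with g(1) have "extend_id g s = g s" "g s \<in> {0..1}"
    by (auto simp: extend_id_inside image_subset_iff)
  with True show ?thesis
    using extend_id_mem_iff[OF h, of t] extend_id_inside[of t h] by auto
next
  case False
  with g(2,3) have "extend_id g s = s"
    by (simp add: extend_id_outside)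
  with False show ?thesis
    using extend_id_mem_iff[OF h, of t] extend_id_outside[OF h(2,3), of t] by auto
qed

lemma extend_id_mem_interval:
  assumes "g ` {0..1} \<subseteq> {0..1}" and "g 0 = 0" and "g 1 = 1"
    and "a \<le> 0" and "1 \<le> b" and "s \<in> {a..b}"
  shows "extend_id g s \<in> {a..b}"
proof (cases "s \<in> {0..1}")
  case True
  with assms(1) have "extend_id g s \<in> {0..1}"
    by (auto simp: extend_id_inside image_subset_iff)
  with assms(4,5) show ?thesis
    by auto
next
  case False
  with assms(2,3,6) show ?thesis
    by (simp add: extend_id_outside)
qed

lemma zero_set_not_separated:
  fixes p :: "real \<times> real \<Rightarrow> real"
  assumes "a \<le> b" and "c \<le> d" and "continuous_on ({a..b} \<times> {c..d}) p"
    and "\<And>t. t \<in> {c..d} \<Longrightarrow> p (a, t) \<le> 0" and "\<And>t. t \<in> {c..d} \<Longrightarrow> 0 \<le> p (b, t)"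
    and "closed A" and "closed B" and "A \<inter> B = {}"
    and "{a..b} \<times> {c} \<subseteq> A" and "{a..b} \<times> {d} \<subseteq> B"
  obtains s t where "s \<in> {a..b}" "t \<in> {c..d}" "p (s, t) = 0" "(s, t) \<notin> A \<union> B"
proof -
  obtain chi :: "real \<times> real \<Rightarrow> real" where chi: "continuous_on UNIV chi"
    and chi_A: "\<And>x. x \<in> A \<Longrightarrow> chi x = -1" and chi_B: "\<And>x. x \<in> B \<Longrightarrow> chi x = 1"
    by (rule Urysohn[OF assms(6-8)]) blast
  have "continuous_on ({a..b} \<times> {c..d}) chi"
    using chi by (rule continuous_on_subset) simp
  moreover have "chi (s, c) \<le> 0" "0 \<le> chi (s, d)" if "s \<in> {a..b}" for s
    using chi_A[OF subsetD[OF assms(9)]] chi_B[OF subsetD[OF assms(10)]] that by auto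
  ultimately obtain s t where "s \<in> {a..b}" "t \<in> {c..d}" "p (s, t) = 0" "chi (s, t) = 0"
    using poincare_miranda_2d[of a b c d p chi] assms(1-5) by blast
  moreover have "(s, t) \<notin> A \<union> B"
    using chi_A chi_B \<open>chi (s, t) = 0\<close> by fastforce
  ultimately show ?thesis
    using that by blast
qed

lemma compact_coincidence_set:
  fixes g h :: "real \<Rightarrow> real"
  assumes "continuous_on {0..1} g" and "continuous_on {0..1} h"
  shows "compact {(s, t). s \<in> {0..1} \<and> t \<in> {0..1} \<and> g s = h t}"
proof (rule closedin_compact)
  show "compact ({0..1::real} \<times> {0..1::real})"
    by (intro compact_Times compact_Icc)
  have "continuous_on ({0..1} \<times> {0..1}) (\<lambda>x. g (fst x) - h (snd x))"
    by (intro continuous_intros continuous_on_compose2[OF assms(1)] continuous_on_compose2[OF assms(2)]) auto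
  then have "closedin (top_of_set ({0..1} \<times> {0..1})) {x \<in> {0..1} \<times> {0..1}. g (fst x) - h (snd x) = 0}"
    by (rule continuous_closedin_preimage_constant)
  moreover have "{x \<in> {0..1} \<times> {0..1}. g (fst x) - h (snd x) = 0} =
      {(s, t). s \<in> {0..1} \<and> t \<in> {0..1} \<and> g s = h t}"
    by auto
  ultimately show "closedin (top_of_set ({0..1} \<times> {0..1})) {(s, t). s \<in> {0..1} \<and> t \<in> {0..1} \<and> g s = h t}"
    by simp
qed

lemma connected_component_of_coincidence_set:
  fixes g h :: "real \<Rightarrow> real"
  assumes g: "continuous_on {0..1} g" "g ` {0..1} \<subseteq> {0..1}" "g 0 = 0" "g 1 = 1"
    and h: "continuous_on {0..1} h" "h ` {0..1} \<subseteq> {0..1}" "h 0 = 0" "h 1 = 1"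
  shows "connected_component_of (top_of_set {(s, t). s \<in> {0..1} \<and> t \<in> {0..1} \<and> g s = h t})
           (0, 0) (1, 1)"
proof (rule ccontr)
  define K where "K = {(s, t). s \<in> {0..1::real} \<and> t \<in> {0..1::real} \<and> g s = h t}"
  assume "\<not> connected_component_of (top_of_set K) (0, 0) (1, 1)"
  moreover have "compact K" "(0, 0) \<in> K" "(1, 1) \<in> K"
    using compact_coincidence_set[OF g(1) h(1)] g h by (auto simp: K_def)
  ultimately obtain U V where UV: "closed U" "closed V" "U \<union> V = K" "U \<inter> V = {}"
    and "(0, 0) \<in> U" "(1, 1) \<in> V"
    using compact_not_connected_component_separated by metis
  moreover have "K \<subseteq> {0..1} \<times> {0..1}"
    by (auto simp: K_def)
  ultimately have UV_bounds: "(0, 0) \<notin> V" "(1, 1) \<notin> U" "U \<subseteq> {0..1} \<times> {0..1}" "V \<subseteq> {0..1} \<times> {0..1}"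
    by blast+
  define A where "A = U \<union> (\<lambda>s. (s, s)) ` {-1..0} \<union> {-1..2} \<times> {-1::real}"
  define B where "B = V \<union> (\<lambda>s. (s, s)) ` {1..2} \<union> {-1..2} \<times> {2::real}"
  have compact_diagonal: "compact ((\<lambda>s::real. (s, s)) ` {a..b})" for a b
    by (intro compact_continuous_image continuous_intros) auto
  have AB: "closed A" "closed B"
    unfolding A_def B_def
    by (intro closed_Un UV(1,2) compact_imp_closed compact_diagonal compact_Times compact_Icc compact_sing)+
  have AB_disjoint: "A \<inter> B = {}"
  proof -
    have "(s, s) \<notin> U" if "1 \<le> s" for s
      using UV_bounds that by (cases "s = 1") auto
    moreover have "(s, s) \<notin> V" if "s \<le> 0" for s
      using UV_bounds that by (cases "s = 0") auto
    ultimately show ?thesis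
      using UV(4) UV_bounds unfolding A_def B_def by auto
  qed
  have edges: "{-1..2} \<times> {-1} \<subseteq> A" "{-1..2} \<times> {2} \<subseteq> B"
    unfolding A_def B_def by auto
  define p where "p x = extend_id g (fst x) - extend_id h (snd x)" for x :: "real \<times> real"
  have p_cont: "continuous_on ({-1..2} \<times> {-1..2}) p"
    unfolding p_def by (rule continuous_on_extend_id_diff[OF g(1) h(1)])
  have p_sides: "p (-1, t) \<le> 0" "0 \<le> p (2, t)" if "t \<in> {-1..2}" for t
    using extend_id_mem_interval[OF h(2-4), of "-1" 2 t] extend_id_outside[OF g(3,4)] that
    by (auto simp: p_def)
  obtain s t where st: "s \<in> {-1..2}" "t \<in> {-1..2}" "p (s, t) = 0" "(s, t) \<notin> A \<union> B"
    by (rule zero_set_not_separated[of "-1" 2 "-1" 2 p A B]) (use p_cont p_sides AB AB_disjoint edges in auto)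
  then have "(s, t) \<in> K \<or> s \<notin> {0..1} \<and> t = s"
    using extend_id_eq_iff[OF g(2-4) h(2-4), of s t] by (auto simp: p_def K_def)
  with st UV(3) show False
    unfolding A_def B_def by force
qed

lemma continuous_map_II_injection: "continuous_map (top_of_set {0..1}) II (\<lambda>s. (b, s))"
  unfolding II_def by (rule continuous_map_component_injection) auto

lemma continuous_map_II_slice:
  assumes "continuous_map II (top_of_set {0..1}) f"
  shows "continuous_on {0..1} (\<lambda>s. f (b, s))" and "(\<lambda>s. f (b, s)) ` {0..1} \<subseteq> {0..1}"
  using continuous_map_compose[OF continuous_map_II_injection assms]
  by (auto simp: continuous_map_subtopology_eu o_def)

lemma continuous_map_II_pair_embedding:
  assumes "S \<subseteq> {0..1} \<times> {0..1}"
  shows "continuous_map (top_of_set S) (prod_topology II II) (\<lambda>x. ((b, fst x), (b', snd x)))"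
proof -
  have "continuous_map (top_of_set S) (top_of_set {0..1}) fst"
    and "continuous_map (top_of_set S) (top_of_set {0..1}) snd"
    using assms by (auto simp: continuous_map_subtopology_eu
        intro: continuous_on_fst[OF continuous_on_id] continuous_on_snd[OF continuous_on_id])
  then have "continuous_map (top_of_set S) II (\<lambda>x. (b, fst x))"
    and "continuous_map (top_of_set S) II (\<lambda>x. (b', snd x))"
    by (auto intro: continuous_map_compose[OF _ continuous_map_II_injection, unfolded o_def])
  then show ?thesis
    by (simp add: continuous_map_pairwise o_def)
qed

theorem lemma1:
  fixes f :: "bool \<times> real \<Rightarrow> real"
  assumes "continuous_map II (top_of_set {0..1}) f"
    and "f (False, 0) = 0" and "f (True, 0) = 0"
    and "f (False, 1) = 1" and "f (True, 1) = 1"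
  shows "connected_component_of (subtopology (prod_topology II II) (Sigma_f f))
           ((False, 0), (True, 0)) ((False, 1), (True, 1))"
proof -
  define K where "K = {(s, t). s \<in> {0..1::real} \<and> t \<in> {0..1::real} \<and> f (False, s) = f (True, t)}"
  define e where "e x = ((False, fst x), (True, snd x))" for x :: "real \<times> real"
  have "connected_component_of (top_of_set K) (0, 0) (1, 1)"
    unfolding K_def
    by (rule connected_component_of_coincidence_set)
      (use continuous_map_II_slice[OF assms(1)] assms(2-5) in auto)
  moreover have "continuous_map (top_of_set K) (prod_topology II II) e"
    unfolding e_def by (rule continuous_map_II_pair_embedding) (auto simp: K_def)
  moreover have "e ` K \<subseteq> Sigma_f f"
    by (auto simp: e_def K_def Sigma_f_def II_def)
  ultimately have "connected_component_of (subtopology (prod_topology II II) (Sigma_f f)) (e (0, 0)) (e (1, 1))"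
    by (intro connected_component_of_continuous_image[of _ _ e])
      (simp_all add: continuous_map_in_subtopology image_subset_iff_funcset)
  then show ?thesis
    by (simp add: e_def)
qed

end
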